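(* Let $A$ and $B$ be bounded lattices and let $(\alpha,\beta)$ be a retractable Galois connection between $A$ and $B$ such that $\beta(0)=0$. (i) If $b,b'\in B$ are such that $\beta(b)$ is essential in $[0,\beta(b')]$, then $b\wedge b'$ is essential in $[0,b']$. (ii) If $a,a'\in A$ are such that $a$ is essential in $[0,a']$ and $a'$ is a Galois element, then $\alpha(a)$ is essential in $[0,\alpha(a')]$. Assume in addition that either (E) $(\alpha,\beta)$ is essential, or (C) $(\alpha,\beta)$ is cyclically essential and $A$ is cyclically generated. Then: (iii) If $b,b'\in B$ are such that $b$ is essential in $[0,b']$, then $\beta(b)$ is essential in $[0,\beta(b')]$. (iv) If $a,a'\in A$ (where, in case (C), $a$ is additionally assumed to be cyclic) are such that $\alpha(a)$ is essential in $[0,\alpha(a')]$, then $a\wedge a'$ is essential in $[0,a']$.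
   Context: A bounded lattice $(A,\wedge,\vee,0,1)$ has least element $0$ and greatest element $1$, with $0\neq1$; $[a,a']=\{x: a\le x\le a'\}$. A Galois connection between lattices $A$ and $B$ is a pair of order-preserving maps $\alpha:A\to B$, $\beta:B\to A$ such that $\alpha(a)\le b$ iff $a\le\beta(b)$ for all $a\in A$, $b\in B$. An element $a\in A$ is Galois if $\beta\alpha(a)=a$. For $a\le c$, $a$ is essential in $[0,c]$ if for every $x\le c$, $a\wedge x=0$ implies $x=0$. An element $a$ is cyclic if $[0,a]$ is a distributive lattice satisfying the ascending chain condition; $A$ is cyclically generated if every element of $A$ is a join of cyclic elements. The Galois connection is essential (resp. cyclically essential) if for every $a\in A$ (resp. every cyclic $a\in A$), $a$ is essential in $[0,\beta\alpha(a)]$; it is retractable if for every $b\in B$, $\alpha\beta(b)$ is essential in $[0,b]$. *)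

theory Defs
  imports Main
begin

text \<open>Bounded lattices are modelled by the type class bounded_lattice (bot = 0, top = 1);
  the requirement 0 \<noteq> 1 is stated as an explicit hypothesis in the theorem.\<close>

definition galois_conn :: "('a::order \<Rightarrow> 'b::order) \<Rightarrow> ('b \<Rightarrow> 'a) \<Rightarrow> bool" where
  "galois_conn \<alpha> \<beta> \<longleftrightarrow> mono \<alpha> \<and> mono \<beta> \<and> (\<forall>a b. \<alpha> a \<le> b \<longleftrightarrow> a \<le> \<beta> b)"

definition galois_elem :: "('a \<Rightarrow> 'b) \<Rightarrow> ('b \<Rightarrow> 'a) \<Rightarrow> 'a \<Rightarrow> bool" where
  "galois_elem \<alpha> \<beta> a \<longleftrightarrow> \<beta> (\<alpha> a) = a"

definition essential_in :: "'a::bounded_lattice \<Rightarrow> 'a \<Rightarrow> bool" where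
  "essential_in a c \<longleftrightarrow> a \<le> c \<and> (\<forall>x. x \<le> c \<longrightarrow> inf a x = bot \<longrightarrow> x = bot)"

definition cyclic :: "'a::bounded_lattice \<Rightarrow> bool" where
  "cyclic a \<longleftrightarrow>
     (\<forall>x y z. x \<le> a \<longrightarrow> y \<le> a \<longrightarrow> z \<le> a \<longrightarrow> inf x (sup y z) = sup (inf x y) (inf x z)) \<and>
     \<not> (\<exists>f :: nat \<Rightarrow> 'a. (\<forall>n. f n \<le> a) \<and> (\<forall>n. f n < f (Suc n)))"

definition is_join :: "'a::order \<Rightarrow> 'a set \<Rightarrow> bool" where
  "is_join a S \<longleftrightarrow> (\<forall>s\<in>S. s \<le> a) \<and> (\<forall>u. (\<forall>s\<in>S. s \<le> u) \<longrightarrow> a \<le> u)"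

definition cyclically_generated :: "'a::bounded_lattice itself \<Rightarrow> bool" where
  "cyclically_generated _ \<longleftrightarrow> (\<forall>a::'a. \<exists>S. (\<forall>s\<in>S. cyclic s) \<and> is_join a S)"

definition essential_gc :: "('a::bounded_lattice \<Rightarrow> 'b) \<Rightarrow> ('b \<Rightarrow> 'a) \<Rightarrow> bool" where
  "essential_gc \<alpha> \<beta> \<longleftrightarrow> (\<forall>a. essential_in a (\<beta> (\<alpha> a)))"

definition cyclically_essential_gc :: "('a::bounded_lattice \<Rightarrow> 'b) \<Rightarrow> ('b \<Rightarrow> 'a) \<Rightarrow> bool" where
  "cyclically_essential_gc \<alpha> \<beta> \<longleftrightarrow> (\<forall>a. cyclic a \<longrightarrow> essential_in a (\<beta> (\<alpha> a)))"

definition retractable_gc :: "('a \<Rightarrow> 'b::bounded_lattice) \<Rightarrow> ('b \<Rightarrow> 'a) \<Rightarrow> bool" where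
  "retractable_gc \<alpha> \<beta> \<longleftrightarrow> (\<forall>b. essential_in (\<alpha> (\<beta> b)) b)"

end

theory Submission
  imports Defs
begin

text \<open>Retractability makes \<beta> reflect \<open>0\<close>, and \<open>\<beta> 0 = 0\<close> makes \<alpha> reflect \<open>0\<close>;
  together with \<open>\<beta> (b \<sqinter> b') = \<beta> b \<sqinter> \<beta> b'\<close> this lets a disjointness \<open>u \<sqinter> x = 0\<close> be
  transported back and forth across the connection. Parts (i) and (ii) need nothing more.
  For (iii) and (iv) one also needs elements that are essential in their Galois closure
  \<open>\<beta>\<alpha>(s)\<close>: in case (E) every element is such, and in case (C) every nonzero element
  lies above a nonzero cyclic one, which suffices to test essentiality.\<close>

lemma galois_conn_adj: "galois_conn \<alpha> \<beta> \<Longrightarrow> \<alpha> a \<le> b \<longleftrightarrow> a \<le> \<beta> b"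
  by (simp add: galois_conn_def)

lemma galois_conn_counit: "galois_conn \<alpha> \<beta> \<Longrightarrow> \<alpha> (\<beta> b) \<le> b"
  by (simp add: galois_conn_def)

lemma galois_conn_monoD1: "galois_conn \<alpha> \<beta> \<Longrightarrow> x \<le> y \<Longrightarrow> \<alpha> x \<le> \<alpha> y"
  unfolding galois_conn_def by (meson monoD)

lemma galois_conn_monoD2: "galois_conn \<alpha> \<beta> \<Longrightarrow> x \<le> y \<Longrightarrow> \<beta> x \<le> \<beta> y"
  unfolding galois_conn_def by (meson monoD)

lemma galois_conn_inf:
  fixes \<alpha> :: "'a::semilattice_inf \<Rightarrow> 'b::semilattice_inf"
  assumes gc: "galois_conn \<alpha> \<beta>"
  shows "\<beta> (inf x y) = inf (\<beta> x) (\<beta> y)"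
proof (rule antisym)
  show "\<beta> (inf x y) \<le> inf (\<beta> x) (\<beta> y)"
    using galois_conn_monoD2[OF gc] by simp
  have "\<alpha> (inf (\<beta> x) (\<beta> y)) \<le> inf x y"
    by (simp add: galois_conn_adj[OF gc])
  then show "inf (\<beta> x) (\<beta> y) \<le> \<beta> (inf x y)"
    using galois_conn_adj[OF gc] by blast
qed

lemma galois_conn_bot:
  fixes \<alpha> :: "'a::order_bot \<Rightarrow> 'b::order_bot"
  assumes "galois_conn \<alpha> \<beta>"
  shows "\<alpha> bot = bot"
  using galois_conn_adj[OF assms, of bot bot] by (simp add: bot_unique)

lemma galois_conn_eq_bot_reflect:
  fixes \<alpha> :: "'a::order_bot \<Rightarrow> 'b::order_bot"
  assumes "galois_conn \<alpha> \<beta>" and "\<beta> bot = bot" and "\<alpha> x = bot"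
  shows "x = bot"
  using assms galois_conn_adj[OF assms(1), of x bot] by (simp add: bot_unique)

lemma inf_eq_bot_antimono:
  fixes a :: "'a::bounded_lattice"
  assumes "inf a y = bot" and "x \<le> y"
  shows "inf a x = bot"
proof -
  have "inf a x \<le> inf a y"
    using assms(2) by (simp add: le_infI2)
  then show ?thesis
    using assms(1) by (simp add: bot_unique)
qed

lemma essential_inI:
  "a \<le> c \<Longrightarrow> (\<And>x. x \<le> c \<Longrightarrow> inf a x = bot \<Longrightarrow> x = bot) \<Longrightarrow> essential_in a c"
  by (simp add: essential_in_def)

lemma essential_inD:
  "essential_in a c \<Longrightarrow> x \<le> c \<Longrightarrow> inf a x = bot \<Longrightarrow> x = bot"
  by (simp add: essential_in_def)

lemma essential_in_le: "essential_in a c \<Longrightarrow> a \<le> c"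
  by (simp add: essential_in_def)

lemma retractable_eq_bot_reflect:
  fixes \<alpha> :: "'a::bounded_lattice \<Rightarrow> 'b::bounded_lattice"
  assumes gc: "galois_conn \<alpha> \<beta>" and retr: "retractable_gc \<alpha> \<beta>" and "\<beta> x = bot"
  shows "x = bot"
proof -
  have "essential_in (\<alpha> (\<beta> x)) x"
    using retr by (simp add: retractable_gc_def)
  moreover have "\<alpha> (\<beta> x) = bot"
    using assms(3) galois_conn_bot[OF gc] by simp
  ultimately show ?thesis
    by (simp add: essential_in_def)
qed

text \<open>The common content of the hypotheses (E) and (C) that (iii) and (iv) depend on.\<close>

definition closure_essential_dense :: "('a::bounded_lattice \<Rightarrow> 'b) \<Rightarrow> ('b \<Rightarrow> 'a) \<Rightarrow> bool" where
  "closure_essential_dense \<alpha> \<beta> \<longleftrightarrow>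
     (\<forall>y. y \<noteq> bot \<longrightarrow> (\<exists>s. s \<le> y \<and> s \<noteq> bot \<and> essential_in s (\<beta> (\<alpha> s))))"

lemma closure_essential_dense_if_essential_gc:
  "essential_gc \<alpha> \<beta> \<Longrightarrow> closure_essential_dense \<alpha> \<beta>"
  unfolding essential_gc_def closure_essential_dense_def by blast

lemma cyclic_below_nonzero:
  assumes "cyclically_generated TYPE('a::bounded_lattice)" and "(y::'a) \<noteq> bot"
  obtains s where "cyclic s" "s \<le> y" "s \<noteq> bot"
proof -
  obtain S where cyc: "\<forall>s\<in>S. cyclic s" and join: "is_join y S"
    using assms(1) unfolding cyclically_generated_def by blast
  have "\<exists>s\<in>S. s \<noteq> bot"
  proof (rule ccontr)
    assume "\<not> (\<exists>s\<in>S. s \<noteq> bot)"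
    then have "y \<le> bot"
      using join unfolding is_join_def by auto
    with assms(2) show False
      by (simp add: bot_unique)
  qed
  then show ?thesis
    using that cyc join unfolding is_join_def by blast
qed

lemma closure_essential_dense_if_cyclically_essential:
  assumes "cyclically_essential_gc \<alpha> \<beta>" and "cyclically_generated TYPE('a::bounded_lattice)"
  shows "closure_essential_dense (\<alpha> :: 'a \<Rightarrow> 'b) \<beta>"
  unfolding closure_essential_dense_def
proof (intro allI impI)
  fix y :: 'a
  assume "y \<noteq> bot"
  then obtain s where "cyclic s" "s \<le> y" "s \<noteq> bot"
    using cyclic_below_nonzero[OF assms(2)] by blast
  with assms(1) show "\<exists>s\<le>y. s \<noteq> bot \<and> essential_in s (\<beta> (\<alpha> s))"
    unfolding cyclically_essential_gc_def by blast
qed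

lemma closure_essential_dense_eq_bot:
  assumes dense: "closure_essential_dense \<alpha> \<beta>"
    and down: "\<And>s. s \<le> y \<Longrightarrow> P s"
    and vanish: "\<And>s. essential_in s (\<beta> (\<alpha> s)) \<Longrightarrow> P s \<Longrightarrow> s = bot"
  shows "y = bot"
  using dense down vanish unfolding closure_essential_dense_def by blast

lemma essential_inf_if_essential_beta:
  fixes \<alpha> :: "'a::bounded_lattice \<Rightarrow> 'b::bounded_lattice"
  assumes gc: "galois_conn \<alpha> \<beta>" and retr: "retractable_gc \<alpha> \<beta>" and beta0: "\<beta> bot = bot"
    and ess: "essential_in (\<beta> b) (\<beta> b')"
  shows "essential_in (inf b b') b'"
proof (rule essential_inI)
  fix x
  assume x: "x \<le> b'" and disj: "inf (inf b b') x = bot"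
  have "inf b x = bot"
    using disj x by (simp add: inf_assoc inf.absorb2)
  then have "inf (\<beta> b) (\<beta> x) = bot"
    using galois_conn_inf[OF gc, of b x] beta0 by simp
  then have "\<beta> x = bot"
    using essential_inD[OF ess] galois_conn_monoD2[OF gc x] by blast
  then show "x = bot"
    using retractable_eq_bot_reflect[OF gc retr] by blast
qed simp

lemma essential_alpha_if_essential:
  fixes \<alpha> :: "'a::bounded_lattice \<Rightarrow> 'b::bounded_lattice"
  assumes gc: "galois_conn \<alpha> \<beta>" and retr: "retractable_gc \<alpha> \<beta>" and beta0: "\<beta> bot = bot"
    and ess: "essential_in a a'" and galois: "galois_elem \<alpha> \<beta> a'"
  shows "essential_in (\<alpha> a) (\<alpha> a')"
proof (rule essential_inI)
  show "\<alpha> a \<le> \<alpha> a'"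
    using galois_conn_monoD1[OF gc essential_in_le[OF ess]] .
  fix x
  assume x: "x \<le> \<alpha> a'" and disj: "inf (\<alpha> a) x = bot"
  have "\<beta> x \<le> a'"
    using galois_conn_monoD2[OF gc x] galois by (simp add: galois_elem_def)
  have "\<alpha> (inf a (\<beta> x)) \<le> inf (\<alpha> a) x"
    using galois_conn_monoD1[OF gc] galois_conn_counit[OF gc, of x]
    by (meson inf.cobounded1 inf.cobounded2 le_inf_iff order_trans)
  then have "\<alpha> (inf a (\<beta> x)) = bot"
    using disj by (simp add: bot_unique)
  then have "inf a (\<beta> x) = bot"
    using galois_conn_eq_bot_reflect[OF gc beta0] by blast
  then have "\<beta> x = bot"
    using essential_inD[OF ess \<open>\<beta> x \<le> a'\<close>] by blast
  then show "x = bot"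
    using retractable_eq_bot_reflect[OF gc retr] by blast
qed

lemma essential_beta_closure_case:
  fixes \<alpha> :: "'a::bounded_lattice \<Rightarrow> 'b::bounded_lattice"
  assumes gc: "galois_conn \<alpha> \<beta>" and retr: "retractable_gc \<alpha> \<beta>" and beta0: "\<beta> bot = bot"
    and ess: "essential_in b b'" and closure: "essential_in y (\<beta> (\<alpha> y))"
    and y: "y \<le> \<beta> b'" and disj: "inf (\<beta> b) y = bot"
  shows "y = bot"
proof -
  define z where "z = inf (\<alpha> y) b"
  have beta_z: "\<beta> z = inf (\<beta> (\<alpha> y)) (\<beta> b)"
    unfolding z_def by (rule galois_conn_inf[OF gc])
  have "inf y (\<beta> z) = bot"
    using disj unfolding beta_z by (metis inf.assoc inf.commute inf_bot_right)
  then have "\<beta> z = bot"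
    using essential_inD[OF closure] beta_z by simp
  then have "inf b (\<alpha> y) = bot"
    using retractable_eq_bot_reflect[OF gc retr] unfolding z_def by (simp add: inf.commute)
  moreover have "\<alpha> y \<le> b'"
    using y galois_conn_adj[OF gc] by blast
  ultimately have "\<alpha> y = bot"
    using essential_inD[OF ess] by blast
  then show ?thesis
    using galois_conn_eq_bot_reflect[OF gc beta0] by blast
qed

lemma essential_beta_if_essential:
  fixes \<alpha> :: "'a::bounded_lattice \<Rightarrow> 'b::bounded_lattice"
  assumes gc: "galois_conn \<alpha> \<beta>" and retr: "retractable_gc \<alpha> \<beta>" and beta0: "\<beta> bot = bot"
    and dense: "closure_essential_dense \<alpha> \<beta>" and ess: "essential_in b b'"
  shows "essential_in (\<beta> b) (\<beta> b')"
proof (rule essential_inI)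
  show "\<beta> b \<le> \<beta> b'"
    using galois_conn_monoD2[OF gc essential_in_le[OF ess]] .
  fix y
  assume "y \<le> \<beta> b'" and "inf (\<beta> b) y = bot"
  then show "y = bot"
    using closure_essential_dense_eq_bot[OF dense,
        where P = "\<lambda>s. s \<le> \<beta> b' \<and> inf (\<beta> b) s = bot"]
      essential_beta_closure_case[OF gc retr beta0 ess] inf_eq_bot_antimono
    by (meson order_trans)
qed

lemma essential_inf_closure_case:
  fixes \<alpha> :: "'a::bounded_lattice \<Rightarrow> 'b::bounded_lattice"
  assumes gc: "galois_conn \<alpha> \<beta>" and retr: "retractable_gc \<alpha> \<beta>" and beta0: "\<beta> bot = bot"
    and closure_a: "essential_in a (\<beta> (\<alpha> a))" and closure_x: "essential_in x (\<beta> (\<alpha> x))"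
    and ess: "essential_in (\<alpha> a) (\<alpha> a')"
    and x: "x \<le> a'" and disj: "inf a x = bot"
  shows "x = bot"
proof -
  define z where "z = inf (\<alpha> a) (\<alpha> x)"
  have beta_z: "\<beta> z = inf (\<beta> (\<alpha> a)) (\<beta> (\<alpha> x))"
    unfolding z_def by (rule galois_conn_inf[OF gc])
  have "inf x (inf a (\<beta> z)) = bot"
    using disj by (metis inf.assoc inf.commute inf_bot_left)
  moreover have "inf a (\<beta> z) \<le> \<beta> (\<alpha> x)"
    unfolding beta_z by (simp add: le_infI2)
  ultimately have "inf a (\<beta> z) = bot"
    using essential_inD[OF closure_x] by blast
  then have "\<beta> z = bot"
    using essential_inD[OF closure_a] beta_z by simp
  then have "inf (\<alpha> a) (\<alpha> x) = bot"
    using retractable_eq_bot_reflect[OF gc retr] unfolding z_def by blast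
  then have "\<alpha> x = bot"
    using essential_inD[OF ess] galois_conn_monoD1[OF gc x] by blast
  then show ?thesis
    using galois_conn_eq_bot_reflect[OF gc beta0] by blast
qed

lemma essential_inf_if_essential_alpha:
  fixes \<alpha> :: "'a::bounded_lattice \<Rightarrow> 'b::bounded_lattice"
  assumes gc: "galois_conn \<alpha> \<beta>" and retr: "retractable_gc \<alpha> \<beta>" and beta0: "\<beta> bot = bot"
    and dense: "closure_essential_dense \<alpha> \<beta>" and closure_a: "essential_in a (\<beta> (\<alpha> a))"
    and ess: "essential_in (\<alpha> a) (\<alpha> a')"
  shows "essential_in (inf a a') a'"
proof (rule essential_inI)
  fix x
  assume x: "x \<le> a'" and "inf (inf a a') x = bot"
  then have "inf a x = bot"
    by (simp add: inf_assoc inf.absorb2)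
  with x show "x = bot"
    using closure_essential_dense_eq_bot[OF dense, where P = "\<lambda>s. s \<le> a' \<and> inf a s = bot"]
      essential_inf_closure_case[OF gc retr beta0 closure_a _ ess] inf_eq_bot_antimono
    by (meson order_trans)
qed simp

theorem lemma2p7:
  fixes \<alpha> :: "'a::bounded_lattice \<Rightarrow> 'b::bounded_lattice" and \<beta> :: "'b \<Rightarrow> 'a"
  assumes A_nontriv: "(bot::'a) \<noteq> top"
    and B_nontriv: "(bot::'b) \<noteq> top"
    and gc: "galois_conn \<alpha> \<beta>"
    and retr: "retractable_gc \<alpha> \<beta>"
    and beta0: "\<beta> bot = bot"
  shows
    "(\<forall>b b'. essential_in (\<beta> b) (\<beta> b') \<longrightarrow> essential_in (inf b b') b')
   \<and> (\<forall>a a'. essential_in a a' \<longrightarrow> galois_elem \<alpha> \<beta> a' \<longrightarrow> essential_in (\<alpha> a) (\<alpha> a'))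
   \<and> (essential_gc \<alpha> \<beta> \<longrightarrow>
        (\<forall>b b'. essential_in b b' \<longrightarrow> essential_in (\<beta> b) (\<beta> b'))
      \<and> (\<forall>a a'. essential_in (\<alpha> a) (\<alpha> a') \<longrightarrow> essential_in (inf a a') a'))
   \<and> (cyclically_essential_gc \<alpha> \<beta> \<and> cyclically_generated TYPE('a) \<longrightarrow>
        (\<forall>b b'. essential_in b b' \<longrightarrow> essential_in (\<beta> b) (\<beta> b'))
      \<and> (\<forall>a a'. cyclic a \<longrightarrow> essential_in (\<alpha> a) (\<alpha> a') \<longrightarrow> essential_in (inf a a') a'))"
proof (intro conjI allI impI)
  note basics = gc retr beta0
  show "essential_in (inf b b') b'" if "essential_in (\<beta> b) (\<beta> b')" for b b'
    using essential_inf_if_essential_beta[OF basics that] .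
  show "essential_in (\<alpha> a) (\<alpha> a')" if "essential_in a a'" "galois_elem \<alpha> \<beta> a'" for a a'
    using essential_alpha_if_essential[OF basics that] .
  show "essential_in (\<beta> b) (\<beta> b')" if "essential_gc \<alpha> \<beta>" "essential_in b b'" for b b'
    using essential_beta_if_essential[OF basics closure_essential_dense_if_essential_gc[OF that(1)] that(2)] .
  show "essential_in (inf a a') a'" if E: "essential_gc \<alpha> \<beta>" "essential_in (\<alpha> a) (\<alpha> a')" for a a'
    using essential_inf_if_essential_alpha[OF basics closure_essential_dense_if_essential_gc[OF E(1)]]
      E by (simp add: essential_gc_def)
  show "essential_in (\<beta> b) (\<beta> b')"
    if "cyclically_essential_gc \<alpha> \<beta> \<and> cyclically_generated TYPE('a)" "essential_in b b'" for b b'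
    using essential_beta_if_essential[OF basics closure_essential_dense_if_cyclically_essential]
      that by blast
  show "essential_in (inf a a') a'"
    if C: "cyclically_essential_gc \<alpha> \<beta> \<and> cyclically_generated TYPE('a)"
      and "cyclic a" "essential_in (\<alpha> a) (\<alpha> a')" for a a'
    using essential_inf_if_essential_alpha[OF basics closure_essential_dense_if_cyclically_essential]
      that by (simp add: cyclically_essential_gc_def)
qed

end
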